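(* Let $c_0\ge0$, $c_1>0$, $a\in\mathbb{R}$, $v_\circ>0$, let $v$ solve $v'=a-c_0v-c_1v^2$, $v(0)=v_\circ$, $s(t)=\int_0^tv$, and suppose one of the following holds: (c) $w$ real, $a\ge0$, $v_\circ>v_\infty$, with $(t_{\min},t_{\max})=(t_\infty,\infty)$; (d) $w$ real, $a<0$, with $(t_{\min},t_{\max})=(t_\infty,t_\circ)$; (e) $w$ complex, with $(t_{\min},t_{\max})=(t_{v_\infty},t_{v_\circ})$. Let $t_\star\in(t_{\min},t_{\max})$, $\zeta=s(t_\star)$, $f(t)=s(t)-\zeta$, and define $t_0=0$ and $$t_{k+1}=\begin{cases}t_k-\dfrac{f(t_k)}{f'(t_k)+f(t_k)/(t_k-t_{\min})},& f(t_k)>0,\\[2mm] t_k-\dfrac{f(t_k)}{f'(t_k)},& f(t_k)\le0.\end{cases}$$ Then all $t_k$ lie in $(t_{\min},t_{\max})$, $t_k\to t_\star$, and the convergence is quadratic: $\limsup_{k\to\infty}|t_{k+1}-t_\star|/|t_k-t_\star|^2<\infty$ (over $k$ with $t_k\neq t_\star$).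
   Context: Notation: $w=\sqrt{c_0^2+4ac_1}\ge 0$ when $c_0^2+4ac_1\ge0$ ("$w$ real"); when $c_0^2+4ac_1<0$ we say "$w$ is complex" and write $|w|=\sqrt{-(c_0^2+4ac_1)}>0$. Set $\alpha=(w+c_0)/2$, $\beta=(w-c_0)/2$, $\gamma=c_1v_\circ+\alpha$, $v_\infty=\beta/c_1$, $\mathcal{L}(x,c)=c^{-1}\log(1-cx)$ ($c\ne0$), $\mathcal{L}(x,0)=-x$, $t_\circ=\mathcal{L}\big(\frac{v_\circ}{a+v_\circ\beta},w\big)$ (zero of $v$), $t_\infty=\mathcal{L}(1/\gamma,w)$ (pole of $v$); in the complex case $\theta_0=\arctan\frac{v_\circ|w|}{v_\circ c_0+2|a|}$, $\theta_1=\arctan\frac{|w|}{2c_1v_\circ+c_0}\in(0,\pi/2]$, $t_{v_\circ}=2\theta_0/|w|$, $t_{v_\infty}=-2\theta_1/|w|$. On $(t_{\min},t_{\max})$ the solution $v$ is finite and positive. *)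

theory Defs
  imports "HOL-Analysis.Analysis"
begin

text \<open>Discriminant \<open>c0^2 + 4 a c1\<close>; w is real iff it is \<open>\<ge> 0\<close>.\<close>
definition disc :: "real \<Rightarrow> real \<Rightarrow> real \<Rightarrow> real" where
  "disc a c0 c1 = c0\<^sup>2 + 4 * a * c1"

definition wR :: "real \<Rightarrow> real \<Rightarrow> real \<Rightarrow> real" where
  "wR a c0 c1 = sqrt (disc a c0 c1)"
definition wAbs :: "real \<Rightarrow> real \<Rightarrow> real \<Rightarrow> real" where
  "wAbs a c0 c1 = sqrt (- disc a c0 c1)"

definition alphaR :: "real \<Rightarrow> real \<Rightarrow> real \<Rightarrow> real" where
  "alphaR a c0 c1 = (wR a c0 c1 + c0) / 2"
definition betaR :: "real \<Rightarrow> real \<Rightarrow> real \<Rightarrow> real" where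
  "betaR a c0 c1 = (wR a c0 c1 - c0) / 2"
definition gammaR :: "real \<Rightarrow> real \<Rightarrow> real \<Rightarrow> real \<Rightarrow> real" where
  "gammaR a c0 c1 vc = c1 * vc + alphaR a c0 c1"
definition vinf :: "real \<Rightarrow> real \<Rightarrow> real \<Rightarrow> real" where
  "vinf a c0 c1 = betaR a c0 c1 / c1"

definition LL :: "real \<Rightarrow> real \<Rightarrow> real" where
  "LL x c = (if c \<noteq> 0 then ln (1 - c * x) / c else - x)"

definition t_circ :: "real \<Rightarrow> real \<Rightarrow> real \<Rightarrow> real \<Rightarrow> real" where
  "t_circ a c0 c1 vc = LL (vc / (a + vc * betaR a c0 c1)) (wR a c0 c1)"
definition t_inf :: "real \<Rightarrow> real \<Rightarrow> real \<Rightarrow> real \<Rightarrow> real" where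
  "t_inf a c0 c1 vc = LL (1 / gammaR a c0 c1 vc) (wR a c0 c1)"

definition theta0 :: "real \<Rightarrow> real \<Rightarrow> real \<Rightarrow> real \<Rightarrow> real" where
  "theta0 a c0 c1 vc = arctan (vc * wAbs a c0 c1 / (vc * c0 + 2 * \<bar>a\<bar>))"
definition theta1 :: "real \<Rightarrow> real \<Rightarrow> real \<Rightarrow> real \<Rightarrow> real" where
  "theta1 a c0 c1 vc = arctan (wAbs a c0 c1 / (2 * c1 * vc + c0))"
definition t_vcirc :: "real \<Rightarrow> real \<Rightarrow> real \<Rightarrow> real \<Rightarrow> real" where
  "t_vcirc a c0 c1 vc = 2 * theta0 a c0 c1 vc / wAbs a c0 c1"
definition t_vinf :: "real \<Rightarrow> real \<Rightarrow> real \<Rightarrow> real \<Rightarrow> real" where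
  "t_vinf a c0 c1 vc = - 2 * theta1 a c0 c1 vc / wAbs a c0 c1"

definition sint :: "(real \<Rightarrow> real) \<Rightarrow> real \<Rightarrow> real" where
  "sint v t = (if 0 \<le> t then integral {0..t} v else - integral {t..0} v)"

definition newton_step :: "(real \<Rightarrow> real) \<Rightarrow> (real \<Rightarrow> real) \<Rightarrow> real \<Rightarrow> real \<Rightarrow> real" where
  "newton_step f f' tmin t =
     (if f t > 0 then t - f t / (f' t + f t / (t - tmin)) else t - f t / f' t)"

fun newton_seq :: "(real \<Rightarrow> real) \<Rightarrow> (real \<Rightarrow> real) \<Rightarrow> real \<Rightarrow> nat \<Rightarrow> real" where
  "newton_seq f f' tmin 0 = 0"
| "newton_seq f f' tmin (Suc k) = newton_step f f' tmin (newton_seq f f' tmin k)"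

end

theory Submission
  imports Defs
begin

text \<open>
  The solution \<open>v\<close> is positive and nonincreasing on the window \<open>(tmin, tmax)\<close>: for real \<open>w\<close>,
  \<open>1 / (c1 v + \<alpha>)\<close> solves the linear equation \<open>R' = 1 - w R\<close>, whose explicit solution vanishes
  at \<open>t_inf\<close> and (for \<open>a < 0\<close>) equals \<open>1 / \<alpha>\<close> at \<open>t_circ\<close>; for complex \<open>w\<close>,
  \<open>arctan ((2 c1 v + c0) / |w|)\<close> decreases linearly and reaches \<open>arctan (c0 / |w|)\<close> at \<open>t_vcirc\<close>.
  So \<open>f = s - \<zeta>\<close> is increasing and concave with \<open>f' = v\<close>. Left of the root the modified step is
  Newton's step for \<open>f\<close>, which increases monotonically to the root; right of the root it is
  Newton's step for \<open>f t * (t - tmin)\<close>, which cannot jump past \<open>tmin\<close>. The limit is a fixed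
  point, hence the root, and the Newton error bound for \<open>f\<close> resp. \<open>f t * (t - tmin)\<close> gives the
  quadratic rate.
\<close>

section \<open>A modified Newton iteration for increasing concave functions\<close>

lemma MVT_between:
  fixes f f' :: "real \<Rightarrow> real"
  assumes "\<And>s. min x y \<le> s \<Longrightarrow> s \<le> max x y \<Longrightarrow> (f has_real_derivative f' s) (at s)"
  shows "\<exists>z. min x y \<le> z \<and> z \<le> max x y \<and> f x - f y = f' z * (x - y)"
proof (cases x y rule: linorder_cases)
  case less
  then obtain z where "x < z" "z < y" "f y - f x = (y - x) * f' z"
    using MVT2[of x y f f'] assms by auto
  then show ?thesis using less by (intro exI[of _ z]) (auto simp: algebra_simps)
next
  case equal
  then show ?thesis by auto
next
  case greater
  then obtain z where "y < z" "z < x" "f x - f y = (x - y) * f' z"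
    using MVT2[of y x f f'] assms by auto
  then show ?thesis using greater by (intro exI[of _ z]) (auto simp: algebra_simps)
qed

lemma newton_step_quadratic_error:
  fixes f f' f'' :: "real \<Rightarrow> real"
  assumes f': "\<And>s. s \<in> {p..q} \<Longrightarrow> (f has_real_derivative f' s) (at s)"
    and f'': "\<And>s. s \<in> {p..q} \<Longrightarrow> (f' has_real_derivative f'' s) (at s)"
    and bound: "\<And>s. s \<in> {p..q} \<Longrightarrow> \<bar>f'' s\<bar> \<le> M"
    and m: "0 < m" "m \<le> f' t" and root: "f r = 0" and "t \<in> {p..q}" "r \<in> {p..q}"
  shows "\<bar>t - f t / f' t - r\<bar> \<le> M / m * (t - r)\<^sup>2"
proof -
  have "\<And>s. min t r \<le> s \<Longrightarrow> s \<le> max t r \<Longrightarrow> (f has_real_derivative f' s) (at s)"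
    using \<open>t \<in> {p..q}\<close> \<open>r \<in> {p..q}\<close> by (intro f') (auto simp: min_def max_def split: if_splits)
  then obtain \<xi> where \<xi>: "min t r \<le> \<xi>" "\<xi> \<le> max t r" "f t - f r = f' \<xi> * (t - r)"
    using MVT_between by blast
  have "\<And>s. min t \<xi> \<le> s \<Longrightarrow> s \<le> max t \<xi> \<Longrightarrow> (f' has_real_derivative f'' s) (at s)"
    using \<xi>(1,2) \<open>t \<in> {p..q}\<close> \<open>r \<in> {p..q}\<close>
    by (intro f'') (auto simp: min_def max_def split: if_splits)
  then obtain \<eta> where \<eta>: "min t \<xi> \<le> \<eta>" "\<eta> \<le> max t \<xi>" "f' t - f' \<xi> = f'' \<eta> * (t - \<xi>)"
    using MVT_between by blast
  have "\<eta> \<in> {p..q}" using \<xi> \<eta> \<open>t \<in> {p..q}\<close> \<open>r \<in> {p..q}\<close> by auto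
  have "t - f t / f' t - r = (t - r) * f'' \<eta> * (t - \<xi>) / f' t"
  proof -
    have "f t = (f' t - f'' \<eta> * (t - \<xi>)) * (t - r)"
      using \<xi>(3) \<eta>(3) root by (simp add: algebra_simps)
    then show ?thesis using m by (simp add: field_simps)
  qed
  also have "\<bar>\<dots>\<bar> \<le> \<bar>t - r\<bar> * M * \<bar>t - r\<bar> / m"
    unfolding abs_divide abs_mult
    using bound[OF \<open>\<eta> \<in> {p..q}\<close>] m \<xi>(1,2)
    by (intro frac_le mult_mono) auto
  also have "\<dots> = M / m * (t - r)\<^sup>2"
    by (simp add: power2_eq_square abs_mult_self_eq)
  finally show ?thesis .
qed

lemma LIMSEQ_iteration_fixpoint:
  assumes "\<And>k. x (Suc k) = g (x k)" and "x \<longlonglongrightarrow> L" and "isCont g L"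
  shows "g L = L"
proof -
  have "(\<lambda>k. g (x k)) \<longlonglongrightarrow> g L"
    using assms(2,3) isCont_tendsto_compose by blast
  then have "(\<lambda>k. x (Suc k)) \<longlonglongrightarrow> g L"
    using assms(1) by simp
  then show ?thesis
    using assms(2) LIMSEQ_Suc LIMSEQ_unique by blast
qed

locale concave_newton =
  fixes F v v' :: "real \<Rightarrow> real" and I :: "real set" and tmin ts :: real
  assumes open_I: "open I" and interval_I: "is_interval I"
    and above_tmin: "\<And>t. t \<in> I \<Longrightarrow> tmin < t"
    and down_to_tmin: "\<And>t s. t \<in> I \<Longrightarrow> tmin < s \<Longrightarrow> s \<le> t \<Longrightarrow> s \<in> I"
    and zero_in_I: "0 \<in> I" and root_in_I: "ts \<in> I"
    and F_deriv: "\<And>t. t \<in> I \<Longrightarrow> (F has_real_derivative v t) (at t)"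
    and v_deriv: "\<And>t. t \<in> I \<Longrightarrow> (v has_real_derivative v' t) (at t)"
    and v'_cont: "continuous_on I v'"
    and v_pos: "\<And>t. t \<in> I \<Longrightarrow> 0 < v t"
    and v'_nonpos: "\<And>t. t \<in> I \<Longrightarrow> v' t \<le> 0"
    and F_root: "F ts = 0"
begin

abbreviation "step \<equiv> newton_step F v tmin"
abbreviation "seq \<equiv> newton_seq F v tmin"

lemma mem_between: "a \<in> I \<Longrightarrow> b \<in> I \<Longrightarrow> a \<le> x \<Longrightarrow> x \<le> b \<Longrightarrow> x \<in> I"
  using interval_I unfolding is_interval_1 by blast

lemma F_strict_mono:
  assumes "x \<in> I" "y \<in> I" "x < y"
  shows "F x < F y"
proof (rule DERIV_pos_imp_increasing[OF \<open>x < y\<close>])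
  fix s assume "x \<le> s" "s \<le> y"
  then have "s \<in> I" using mem_between assms by blast
  then show "\<exists>d. DERIV F s :> d \<and> 0 < d" using F_deriv v_pos by blast
qed

lemma v_antimono:
  assumes "x \<in> I" "y \<in> I" "x \<le> y"
  shows "v y \<le> v x"
proof (rule DERIV_nonpos_imp_nonincreasing[OF \<open>x \<le> y\<close>])
  fix s assume "x \<le> s" "s \<le> y"
  then have "s \<in> I" using mem_between assms by blast
  then show "\<exists>d. DERIV v s :> d \<and> d \<le> 0" using v_deriv v'_nonpos by blast
qed

lemma F_pos_iff: "t \<in> I \<Longrightarrow> 0 < F t \<longleftrightarrow> ts < t"
  using F_strict_mono[of t ts] F_strict_mono[of ts t] root_in_I F_root
  by (cases t ts rule: linorder_cases) auto

lemma F_eq_zero_iff: "t \<in> I \<Longrightarrow> F t = 0 \<longleftrightarrow> t = ts"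
  using F_strict_mono[of t ts] F_strict_mono[of ts t] root_in_I F_root
  by (cases t ts rule: linorder_cases) auto

lemma step_right_eq:
  assumes "t \<in> I" "ts < t"
  shows "step t = t - F t / (v t + F t / (t - tmin))"
  using assms F_pos_iff by (simp add: newton_step_def)

lemma step_left_eq:
  assumes "t \<in> I" "t \<le> ts"
  shows "step t = t - F t / v t"
  using assms F_pos_iff by (simp add: newton_step_def)

lemma step_right:
  assumes t: "t \<in> I" "ts < t"
  shows "step t \<in> I" and "step t < t"
proof -
  have Ft: "0 < F t" and d: "0 < t - tmin"
    using F_pos_iff t above_tmin by auto
  define D where "D = v t + F t / (t - tmin)"
  have pos: "0 < F t / (t - tmin)"
    using Ft d by simp
  have D: "F t / (t - tmin) < D"
    using v_pos[OF t(1)] by (simp add: D_def)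
  then have "0 < D"
    using pos by linarith
  have "D * (t - tmin) = v t * (t - tmin) + F t"
    using d by (simp add: D_def distrib_right)
  then have "F t < D * (t - tmin)"
    using v_pos[OF t(1)] d by simp
  then have "F t / D < t - tmin"
    using \<open>0 < D\<close> by (simp add: divide_less_eq mult.commute)
  moreover have "0 < F t / D"
    using Ft \<open>0 < D\<close> by simp
  moreover have "step t = t - F t / D"
    using step_right_eq[OF t] by (simp add: D_def)
  ultimately show "step t \<in> I" "step t < t"
    using down_to_tmin[OF t(1), of "step t"] by auto
qed

lemma step_left:
  assumes t: "t \<in> I" "t \<le> ts"
  shows "t \<le> step t" and "step t \<le> ts"
proof -
  have step: "step t = t - F t / v t" and vt: "0 < v t"
    using step_left_eq[OF t] v_pos[OF t(1)] by auto
  have "0 \<le> - F t / v t"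
    using F_pos_iff[OF t(1)] t(2) vt by (simp add: divide_nonpos_pos)
  moreover have "- F t \<le> (ts - t) * v t"
  proof (cases "t = ts")
    case False
    then have "t < ts" using t(2) by simp
    moreover have "\<And>s. t \<le> s \<Longrightarrow> s \<le> ts \<Longrightarrow> (F has_real_derivative v s) (at s)"
      using F_deriv mem_between[OF t(1) root_in_I] by blast
    ultimately obtain z where z: "t < z" "z < ts" "F ts - F t = (ts - t) * v z"
      using MVT2[of t ts F v] by blast
    have "v z \<le> v t"
      using v_antimono[OF t(1)] mem_between[OF t(1) root_in_I] z by auto
    then show ?thesis
      using z F_root t(2) by (simp add: mult_left_mono)
  qed (use F_root in simp)
  then have "- F t / v t \<le> ts - t"
    using vt by (metis pos_divide_le_eq)
  ultimately show "t \<le> step t" "step t \<le> ts"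
    using step by auto
qed

lemma seq_in_I: "seq k \<in> I"
proof (induction k)
  case 0
  then show ?case using zero_in_I by simp
next
  case (Suc k)
  then show ?case
    using step_right(1)[of "seq k"] step_left[of "seq k"] mem_between[OF Suc root_in_I]
    by (cases "ts < seq k") auto
qed

lemma seq_tendsto_right:
  assumes right: "\<And>k. ts < seq k"
  shows "seq \<longlonglongrightarrow> ts"
proof -
  have "decseq seq"
    unfolding decseq_Suc_iff using step_right(2)[OF seq_in_I right] by (simp add: less_imp_le)
  then obtain L where L: "seq \<longlonglongrightarrow> L" "\<And>k. L \<le> seq k"
    using decseq_convergent[of seq ts] right less_imp_le by blast
  have "ts \<le> L"
    using LIMSEQ_le_const[OF L(1)] right less_imp_le by blast
  then have LI: "L \<in> I"
    using mem_between[OF root_in_I seq_in_I[of 0] _ L(2)] by blast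
  have FL: "0 \<le> F L"
    using F_pos_iff[OF LI] F_eq_zero_iff[OF LI] \<open>ts \<le> L\<close> by force
  define D where "D = (\<lambda>t. v t + F t / (t - tmin))"
  have DL: "0 < D L"
    using v_pos[OF LI] above_tmin[OF LI] FL by (simp add: D_def add_pos_nonneg)
  have "(\<lambda>t. t - F t / D t) L = L"
  proof (rule LIMSEQ_iteration_fixpoint[OF _ L(1)])
    show "seq (Suc k) = seq k - F (seq k) / D (seq k)" for k
      using step_right_eq[OF seq_in_I right] by (simp add: D_def)
    have "isCont F L" "isCont v L"
      using F_deriv[OF LI] v_deriv[OF LI] DERIV_isCont by blast+
    then show "isCont (\<lambda>t. t - F t / D t) L"
      using above_tmin[OF LI] DL unfolding D_def by (intro continuous_intros) auto
  qed
  then have "L = ts"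
    using DL F_eq_zero_iff[OF LI] by simp
  with L(1) show ?thesis by simp
qed

lemma seq_tendsto_left:
  assumes left: "seq j \<le> ts"
  shows "seq \<longlonglongrightarrow> ts"
proof -
  define u where "u = (\<lambda>k. seq (k + j))"
  have u_le: "u k \<le> ts" for k
    by (induction k) (use left step_left(2)[OF seq_in_I] in \<open>auto simp: u_def\<close>)
  have u_Suc: "u (Suc k) = step (u k)" for k
    by (simp add: u_def)
  have "incseq u"
    unfolding incseq_Suc_iff using step_left(1)[OF seq_in_I] u_le u_Suc by (simp add: u_def)
  then obtain L where L: "u \<longlonglongrightarrow> L" "\<And>k. u k \<le> L"
    using incseq_convergent[of u ts] u_le by blast
  have "L \<le> ts"
    using LIMSEQ_le_const2[OF L(1)] u_le by blast
  then have LI: "L \<in> I"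
    using mem_between[OF seq_in_I[of j] root_in_I, of L] L(2)[of 0] by (simp add: u_def)
  have "(\<lambda>t. t - F t / v t) L = L"
  proof (rule LIMSEQ_iteration_fixpoint[OF _ L(1)])
    show "u (Suc k) = u k - F (u k) / v (u k)" for k
      using u_Suc step_left_eq[OF _ u_le] seq_in_I by (simp add: u_def)
    have "isCont F L" "isCont v L"
      using F_deriv[OF LI] v_deriv[OF LI] DERIV_isCont by blast+
    then show "isCont (\<lambda>t. t - F t / v t) L"
      using v_pos[OF LI] by (intro continuous_intros) auto
  qed
  then have "L = ts"
    using v_pos[OF LI] F_eq_zero_iff[OF LI] by simp
  with L(1) show ?thesis
    using LIMSEQ_offset[of seq j ts] by (simp add: u_def)
qed

lemma seq_tendsto: "seq \<longlonglongrightarrow> ts"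
  using seq_tendsto_left seq_tendsto_right by (meson not_le)

lemma step_left_quadratic:
  assumes pq: "{p..q} \<subseteq> I" "ts \<in> {p..q}" and t: "t \<in> {p..q}" "t \<le> ts"
    and m: "0 < m" "\<And>s. s \<in> {p..q} \<Longrightarrow> m \<le> v s"
    and M: "\<And>s. s \<in> {p..q} \<Longrightarrow> \<bar>v' s\<bar> \<le> M"
  shows "\<bar>step t - ts\<bar> \<le> M / m * (t - ts)\<^sup>2"
proof -
  have "\<bar>t - F t / v t - ts\<bar> \<le> M / m * (t - ts)\<^sup>2"
    by (rule newton_step_quadratic_error[of p q F v v'])
      (use F_deriv v_deriv pq M m t F_root in auto)
  moreover have "step t = t - F t / v t"
    using step_left_eq t pq by blast
  ultimately show ?thesis
    by simp
qed

lemma step_right_quadratic: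
  assumes pq: "{p..q} \<subseteq> I" "ts \<in> {p..q}" and t: "t \<in> {p..q}" "ts < t"
    and m: "0 < m" "\<And>s. s \<in> {p..q} \<Longrightarrow> m \<le> v s"
    and M: "\<And>s. s \<in> {p..q} \<Longrightarrow> \<bar>v' s * (s - tmin) + 2 * v s\<bar> \<le> M"
  shows "\<bar>step t - ts\<bar> \<le> M / (m * (ts - tmin)) * (t - ts)\<^sup>2"
proof -
  define g where "g = (\<lambda>s. F s * (s - tmin))"
  define g' where "g' = (\<lambda>s. v s * (s - tmin) + F s)"
  have tI: "t \<in> I" and d: "0 < ts - tmin"
    using t pq above_tmin[OF root_in_I] by auto
  have "step t = t - g t / g' t"
    using step_right_eq[OF tI t(2)] above_tmin[OF tI] by (simp add: g_def g'_def field_simps)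
  moreover have "\<bar>t - g t / g' t - ts\<bar> \<le> M / (m * (ts - tmin)) * (t - ts)\<^sup>2"
  proof (rule newton_step_quadratic_error[of p q g g' "\<lambda>s. v' s * (s - tmin) + 2 * v s"])
    show "(g has_real_derivative g' s) (at s)" if "s \<in> {p..q}" for s
      using F_deriv[of s] that pq unfolding g_def g'_def
      by (auto intro!: derivative_eq_intros simp: algebra_simps)
    show "(g' has_real_derivative v' s * (s - tmin) + 2 * v s) (at s)" if "s \<in> {p..q}" for s
      using F_deriv[of s] v_deriv[of s] that pq unfolding g'_def
      by (auto intro!: derivative_eq_intros simp: algebra_simps)
    have "m * (ts - tmin) \<le> v t * (t - tmin)"
      using m t d v_pos[OF tI] by (intro mult_mono) auto
    then show "m * (ts - tmin) \<le> g' t"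
      using F_pos_iff[OF tI] t(2) by (simp add: g'_def)
  qed (use M m d t pq F_root in \<open>auto simp: g_def\<close>)
  ultimately show ?thesis
    by simp
qed

lemma step_quadratic:
  obtains \<delta> C where "0 < \<delta>" and "\<And>t. \<bar>t - ts\<bar> \<le> \<delta> \<Longrightarrow> \<bar>step t - ts\<bar> \<le> C * (t - ts)\<^sup>2"
proof -
  obtain \<delta> where \<delta>: "0 < \<delta>" "cball ts \<delta> \<subseteq> I"
    using open_I root_in_I open_contains_cball by blast
  define p where "p = ts - \<delta>"
  define q where "q = ts + \<delta>"
  have pq: "{p..q} \<subseteq> I" "ts \<in> {p..q}"
    using \<delta> cball_eq_atLeastAtMost[of ts \<delta>] by (auto simp: p_def q_def)
  have v_cont: "continuous_on {p..q} v"
    using pq(1) v_deriv DERIV_isCont by (blast intro: continuous_at_imp_continuous_on)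
  have v'_cont: "continuous_on {p..q} v'"
    using pq(1) v'_cont continuous_on_subset by blast
  obtain m where m: "0 < m" "\<And>s. s \<in> {p..q} \<Longrightarrow> m \<le> v s"
  proof -
    obtain s0 where "s0 \<in> {p..q}" "\<And>s. s \<in> {p..q} \<Longrightarrow> v s0 \<le> v s"
      using continuous_attains_inf[OF compact_Icc _ v_cont] pq(2) by auto
    then show ?thesis using that[of "v s0"] v_pos pq(1) by blast
  qed
  obtain M1 where M1: "\<And>s. s \<in> {p..q} \<Longrightarrow> norm (v' s) \<le> M1"
    using continuous_on_compact_bound[OF compact_Icc v'_cont] by blast
  have "continuous_on {p..q} (\<lambda>s. v' s * (s - tmin) + 2 * v s)"
    using v_cont v'_cont by (intro continuous_intros)
  then obtain M2 where M2: "\<And>s. s \<in> {p..q} \<Longrightarrow> norm (v' s * (s - tmin) + 2 * v s) \<le> M2"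
    using continuous_on_compact_bound[OF compact_Icc] by blast
  define C where "C = max (M1 / m) (M2 / (m * (ts - tmin)))"
  have "\<bar>step t - ts\<bar> \<le> C * (t - ts)\<^sup>2" if "t \<in> {p..q}" for t
  proof (cases "ts < t")
    case True
    then have "\<bar>step t - ts\<bar> \<le> M2 / (m * (ts - tmin)) * (t - ts)\<^sup>2"
      using step_right_quadratic[OF pq that _ m M2[unfolded real_norm_def]] by blast
    then show ?thesis
      by (smt (verit) C_def mult_right_mono zero_le_power2)
  next
    case False
    then have "\<bar>step t - ts\<bar> \<le> M1 / m * (t - ts)\<^sup>2"
      using step_left_quadratic[OF pq that _ m M1[unfolded real_norm_def]] by simp
    then show ?thesis
      by (smt (verit) C_def mult_right_mono zero_le_power2)
  qed
  then show ?thesis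
    by (intro that[OF \<delta>(1), of C]) (auto simp: p_def q_def abs_le_iff)
qed

lemma seq_quadratic:
  "\<exists>C. \<forall>\<^sub>F k in sequentially. seq k \<noteq> ts \<longrightarrow> \<bar>seq (Suc k) - ts\<bar> / \<bar>seq k - ts\<bar>\<^sup>2 \<le> C"
proof -
  obtain \<delta> C where \<delta>: "0 < \<delta>" and C: "\<And>t. \<bar>t - ts\<bar> \<le> \<delta> \<Longrightarrow> \<bar>step t - ts\<bar> \<le> C * (t - ts)\<^sup>2"
    using step_quadratic by blast
  have "\<forall>\<^sub>F k in sequentially. \<bar>seq k - ts\<bar> < \<delta>"
    using seq_tendsto \<delta> by (auto simp: tendsto_iff dist_real_def)
  then have "\<forall>\<^sub>F k in sequentially. seq k \<noteq> ts \<longrightarrow> \<bar>seq (Suc k) - ts\<bar> / \<bar>seq k - ts\<bar>\<^sup>2 \<le> C"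
    by eventually_elim (use C in \<open>auto simp: divide_le_eq\<close>)
  then show ?thesis ..
qed

end

section \<open>Positivity and decay of the Riccati solution\<close>

lemma sint_has_real_derivative:
  fixes v :: "real \<Rightarrow> real"
  assumes I: "open I" "is_interval I" "0 \<in> I" and t: "t \<in> I" and v: "continuous_on I v"
  shows "(sint v has_real_derivative v t) (at t)"
proof -
  have "min 0 t \<in> I" "max 0 t \<in> I"
    using I t by (simp_all add: min_def max_def)
  then obtain e1 e2 where e1: "0 < e1" "ball (min 0 t) e1 \<subseteq> I"
    and e2: "0 < e2" "ball (max 0 t) e2 \<subseteq> I"
    using I(1) open_contains_ball by meson
  define p where "p = min 0 t - e1 / 2"
  define q where "q = max 0 t + e2 / 2"
  have "p \<in> I"
    using e1 by (intro subsetD[OF e1(2)]) (simp add: p_def dist_real_def)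
  moreover have "q \<in> I"
    using e2 by (intro subsetD[OF e2(2)]) (simp add: q_def dist_real_def)
  ultimately have "{p..q} \<subseteq> I"
    using I(2) unfolding is_interval_1 by (meson atLeastAtMost_iff subsetI)
  then have v_pq: "continuous_on {p..q} v"
    using v continuous_on_subset by blast
  have pq: "p < 0" "p < t" "0 < q" "t < q"
    using e1 e2 by (auto simp: p_def q_def)
  have integrable: "v integrable_on {p..x}" if "x \<le> q" for x
    using continuous_on_subset[OF v_pq] that by (intro integrable_continuous_interval) auto
  have sint_eq: "integral {p..x} v - integral {p..0} v = sint v x" if "x \<in> {p<..<q}" for x
  proof (cases "0 \<le> x")
    case True
    then have "integral {p..0} v + integral {0..x} v = integral {p..x} v"
      using Henstock_Kurzweil_Integration.integral_combine[where a = p and c = 0 and b = x]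
        pq that integrable[of x] by auto
    then show ?thesis using True by (simp add: sint_def)
  next
    case False
    then have "integral {p..x} v + integral {x..0} v = integral {p..0} v"
      using Henstock_Kurzweil_Integration.integral_combine[where a = p and c = x and b = 0]
        pq that integrable[of 0] by auto
    then show ?thesis using False by (simp add: sint_def)
  qed
  have "((\<lambda>x. integral {p..x} v) has_real_derivative v t) (at t within {p..q})"
    using integral_has_real_derivative[OF v_pq, of t] pq by simp
  then have "((\<lambda>x. integral {p..x} v) has_real_derivative v t) (at t)"
    using at_within_Icc_at[of p t q] pq by simp
  then have "((\<lambda>x. integral {p..x} v - integral {p..0} v) has_real_derivative v t) (at t)"
    by (rule DERIV_diff[where E = 0, simplified]) simp
  then show ?thesis
    by (rule has_field_derivative_transform_within_open[of _ _ _ "{p<..<q}"]) (use pq sint_eq in auto)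
qed

lemma linear_ode_vanishes:
  fixes q g G :: "real \<Rightarrow> real"
  assumes "convex I" "t0 \<in> I" "q t0 = 0"
    and q': "\<And>t. t \<in> I \<Longrightarrow> (q has_real_derivative - g t * q t) (at t)"
    and G': "\<And>t. t \<in> I \<Longrightarrow> (G has_real_derivative g t) (at t)"
    and "t \<in> I"
  shows "q t = 0"
proof -
  have "((\<lambda>t. q t * exp (G t)) has_real_derivative 0) (at s within I)" if "s \<in> I" for s
  proof -
    have "((\<lambda>t. q t * exp (G t)) has_real_derivative
        - g s * q s * exp (G s) + q s * (exp (G s) * g s)) (at s)"
      using q'[OF that] G'[OF that] by (auto intro!: derivative_eq_intros)
    then show ?thesis
      by (simp add: has_field_derivative_at_within)
  qed
  then obtain c where "\<forall>t\<in>I. q t * exp (G t) = c"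
    using has_field_derivative_zero_constant[OF \<open>convex I\<close>] by blast
  then have "q t * exp (G t) = q t0 * exp (G t0)"
    using assms(2,6) by simp
  then show ?thesis
    using \<open>q t0 = 0\<close> by simp
qed

definition decay_integral :: "real \<Rightarrow> real \<Rightarrow> real" where
  "decay_integral w t = (if w = 0 then t else (1 - exp (- w * t)) / w)"

definition relax :: "real \<Rightarrow> real \<Rightarrow> real \<Rightarrow> real" where
  "relax r0 w t = r0 + (1 - w * r0) * decay_integral w t"

lemma decay_integral_has_real_derivative:
  "(decay_integral w has_real_derivative exp (- w * t)) (at t)"
proof (cases "w = 0")
  case True
  then show ?thesis unfolding decay_integral_def by (auto intro!: derivative_eq_intros)
next
  case False
  have "((\<lambda>t. (1 - exp (- w * t)) / w) has_real_derivative exp (- w * t)) (at t)"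
    using False by (auto intro!: derivative_eq_intros)
  then show ?thesis using False unfolding decay_integral_def by simp
qed

lemma one_minus_relax: "1 - w * relax r0 w t = (1 - w * r0) * exp (- w * t)"
  by (cases "w = 0") (simp_all add: relax_def decay_integral_def field_simps)

lemma relax_0 [simp]: "relax r0 w 0 = r0"
  by (simp add: relax_def decay_integral_def)

lemma relax_has_real_derivative: "(relax r0 w has_real_derivative 1 - w * relax r0 w t) (at t)"
proof -
  have "(relax r0 w has_real_derivative (1 - w * r0) * exp (- w * t)) (at t)"
    unfolding relax_def by (auto intro!: derivative_eq_intros decay_integral_has_real_derivative)
  then show ?thesis by (simp add: one_minus_relax)
qed

lemma relax_strict_mono:
  assumes "0 < 1 - w * r0"
  shows "strict_mono (relax r0 w)"
proof (rule strict_monoI)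
  fix x y :: real
  assume "x < y"
  then show "relax r0 w x < relax r0 w y"
  proof (rule DERIV_pos_imp_increasing)
    fix s
    show "\<exists>d. DERIV (relax r0 w) s :> d \<and> 0 < d"
      using relax_has_real_derivative[of r0 w s] assms by (auto simp: one_minus_relax)
  qed
qed

lemma relax_LL:
  assumes "0 < 1 - w * x"
  shows "relax r0 w (LL x w) = r0 - (1 - w * r0) * x / (1 - w * x)"
proof (cases "w = 0")
  case True
  then show ?thesis by (simp add: relax_def decay_integral_def LL_def)
next
  case False
  have "exp (- w * LL x w) = 1 / (1 - w * x)"
    using False assms by (simp add: LL_def exp_minus inverse_eq_divide)
  then have "decay_integral w (LL x w) = - x / (1 - w * x)"
    using False assms unfolding decay_integral_def by (simp add: field_simps)
  then show ?thesis by (simp add: relax_def)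
qed

lemma alphaR_betaR:
  assumes "0 \<le> disc a c0 c1"
  shows "0 \<le> wR a c0 c1" and "alphaR a c0 c1 * betaR a c0 c1 = a * c1"
    and "alphaR a c0 c1 - betaR a c0 c1 = c0" and "alphaR a c0 c1 + betaR a c0 c1 = wR a c0 c1"
proof -
  have w2: "wR a c0 c1 * wR a c0 c1 = c0\<^sup>2 + 4 * a * c1"
    using assms by (simp add: wR_def disc_def)
  show "0 \<le> wR a c0 c1" using assms by (simp add: wR_def)
  show "alphaR a c0 c1 * betaR a c0 c1 = a * c1"
    unfolding alphaR_def betaR_def using w2 by (simp add: field_simps power2_eq_square)
  show "alphaR a c0 c1 - betaR a c0 c1 = c0" "alphaR a c0 c1 + betaR a c0 c1 = wR a c0 c1"
    unfolding alphaR_def betaR_def by (simp_all add: field_simps)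
qed

lemma riccati_factor:
  assumes "0 \<le> disc a c0 c1"
  shows "c1 * (a - c0 * x - c1 * x\<^sup>2) = (c1 * x + alphaR a c0 c1) * (betaR a c0 c1 - c1 * x)"
proof -
  have "c1 * (a - c0 * x - c1 * x\<^sup>2) = a * c1 - c0 * c1 * x - c1 * c1 * x * x"
    by (simp add: algebra_simps power2_eq_square)
  also have "\<dots> = alphaR a c0 c1 * betaR a c0 c1 - (alphaR a c0 c1 - betaR a c0 c1) * c1 * x - c1 * c1 * x * x"
    using alphaR_betaR[OF assms] by simp
  finally show ?thesis by (simp add: algebra_simps)
qed

lemma gammaR_gt_wR:
  assumes "0 \<le> disc a c0 c1" "0 < c1" "vinf a c0 c1 < vc"
  shows "wR a c0 c1 < gammaR a c0 c1 vc"
proof -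
  have "betaR a c0 c1 < c1 * vc"
    using assms by (simp add: vinf_def divide_less_eq mult.commute)
  then show ?thesis
    using alphaR_betaR(4)[OF assms(1)] by (simp add: gammaR_def)
qed

lemma one_minus_wR_div_gammaR_pos:
  assumes "0 \<le> disc a c0 c1" "0 < c1" "vinf a c0 c1 < vc"
  shows "0 < 1 - wR a c0 c1 * (1 / gammaR a c0 c1 vc)"
  using gammaR_gt_wR[OF assms] alphaR_betaR(1)[OF assms(1)] by (simp add: field_simps)

lemma relax_pos_iff_t_inf_less:
  assumes "0 \<le> disc a c0 c1" "0 < c1" "vinf a c0 c1 < vc"
  shows "0 < relax (1 / gammaR a c0 c1 vc) (wR a c0 c1) t \<longleftrightarrow> t_inf a c0 c1 vc < t"
proof -
  define r0 where "r0 = 1 / gammaR a c0 c1 vc"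
  define w where "w = wR a c0 c1"
  have pos: "0 < 1 - w * r0"
    using one_minus_wR_div_gammaR_pos[OF assms] by (simp add: r0_def w_def)
  have "relax r0 w (LL r0 w) = r0 - (1 - w * r0) * r0 / (1 - w * r0)"
    by (rule relax_LL[OF pos])
  also have "\<dots> = 0"
    using pos by simp
  finally have "relax r0 w (t_inf a c0 c1 vc) = 0"
    by (simp add: t_inf_def r0_def w_def)
  then show ?thesis
    using strict_mono_less[OF relax_strict_mono[OF pos], of "t_inf a c0 c1 vc" t]
    by (simp add: r0_def w_def)
qed

lemma t_inf_neg:
  assumes "0 \<le> disc a c0 c1" "0 < c1" "vinf a c0 c1 < vc"
  shows "t_inf a c0 c1 vc < 0"
  using relax_pos_iff_t_inf_less[OF assms, of 0] gammaR_gt_wR[OF assms] alphaR_betaR(1)[OF assms(1)]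
  by simp

text \<open>
  By \<open>riccati_factor\<close>, \<open>y = c1 * v + \<alpha>\<close> solves \<open>y' = y (w - y)\<close>, so \<open>1 / y\<close> solves
  \<open>R' = 1 - w R\<close>. Uniqueness is obtained from the linear equation \<open>q' = - y q\<close> for \<open>q = y R - 1\<close>.
\<close>

lemma riccati_reciprocal:
  fixes v :: "real \<Rightarrow> real"
  assumes disc: "0 \<le> disc a c0 c1" and \<gamma>: "gammaR a c0 c1 vc \<noteq> 0"
    and I: "open I" "is_interval I" "0 \<in> I"
    and ode: "\<And>t. t \<in> I \<Longrightarrow> (v has_real_derivative a - c0 * v t - c1 * (v t)\<^sup>2) (at t)"
    and init: "v 0 = vc" and "t \<in> I"
  shows "(c1 * v t + alphaR a c0 c1) * relax (1 / gammaR a c0 c1 vc) (wR a c0 c1) t = 1"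
proof -
  define \<alpha> where "\<alpha> = alphaR a c0 c1"
  define w where "w = wR a c0 c1"
  define R where "R = relax (1 / gammaR a c0 c1 vc) w"
  define y where "y = (\<lambda>t. c1 * v t + \<alpha>)"
  have "y t * R t - 1 = 0"
  proof (rule linear_ode_vanishes[where q = "\<lambda>t. y t * R t - 1" and g = y and G = "\<lambda>t. c1 * sint v t + \<alpha> * t"])
    show "convex I" using I(2) is_interval_convex by blast
    show "y 0 * R 0 - 1 = 0"
      using \<gamma> init by (simp add: y_def R_def \<alpha>_def gammaR_def)
    show "((\<lambda>t. y t * R t - 1) has_real_derivative - y s * (y s * R s - 1)) (at s)" if "s \<in> I" for s
    proof -
      have "betaR a c0 c1 - c1 * v s = w - y s"
        using alphaR_betaR(4)[OF disc] by (simp add: y_def \<alpha>_def w_def)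
      then have v': "c1 * (a - c0 * v s - c1 * (v s)\<^sup>2) = y s * (w - y s)"
        using riccati_factor[OF disc, of "v s"] by (simp add: y_def \<alpha>_def)
      have "((\<lambda>t. y t * R t - 1) has_real_derivative
          c1 * (a - c0 * v s - c1 * (v s)\<^sup>2) * R s + y s * (1 - w * R s)) (at s)"
        unfolding y_def R_def
        by (auto intro!: derivative_eq_intros ode[OF that] relax_has_real_derivative)
      moreover have "c1 * (a - c0 * v s - c1 * (v s)\<^sup>2) * R s + y s * (1 - w * R s)
          = - y s * (y s * R s - 1)"
        unfolding v' by (simp add: algebra_simps)
      ultimately show ?thesis
        by simp
    qed
    show "((\<lambda>t. c1 * sint v t + \<alpha> * t) has_real_derivative y s) (at s)" if "s \<in> I" for s
    proof -
      have "continuous_on I v"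
        using ode DERIV_isCont by (blast intro: continuous_at_imp_continuous_on)
      then show ?thesis
        using sint_has_real_derivative[OF I that] unfolding y_def
        by (auto intro!: derivative_eq_intros)
    qed
  qed (use I \<open>t \<in> I\<close> in auto)
  then show ?thesis
    by (simp add: y_def R_def \<alpha>_def w_def)
qed

lemma riccati_case_c:
  fixes v :: "real \<Rightarrow> real"
  assumes disc: "0 \<le> disc a c0 c1" and c1: "0 < c1" and a: "0 \<le> a" and vc: "vinf a c0 c1 < vc"
    and ode: "\<And>t. t_inf a c0 c1 vc < t \<Longrightarrow>
      (v has_real_derivative a - c0 * v t - c1 * (v t)\<^sup>2) (at t)"
    and init: "v 0 = vc" and t: "t_inf a c0 c1 vc < t"
  shows "0 < v t" and "a - c0 * v t - c1 * (v t)\<^sup>2 \<le> 0"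
proof -
  define w where "w = wR a c0 c1"
  define r0 where "r0 = 1 / gammaR a c0 c1 vc"
  define y where "y = c1 * v t + alphaR a c0 c1"
  have R_pos: "0 < relax r0 w t"
    using relax_pos_iff_t_inf_less[OF disc c1 vc] t by (simp add: r0_def w_def)
  have "gammaR a c0 c1 vc \<noteq> 0"
    using gammaR_gt_wR[OF disc c1 vc] alphaR_betaR(1)[OF disc] by simp
  have "(c1 * v t + alphaR a c0 c1) * relax r0 w t = 1"
    unfolding r0_def w_def
    by (rule riccati_reciprocal[where I = "{t_inf a c0 c1 vc<..}"])
      (use disc init ode t t_inf_neg[OF disc c1 vc] \<open>gammaR a c0 c1 vc \<noteq> 0\<close> in auto)
  then have yR: "y * relax r0 w t = 1"
    by (simp add: y_def)
  then have "(y - w) * relax r0 w t = 1 - w * relax r0 w t"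
    by (simp add: algebra_simps)
  also have "\<dots> > 0"
    using one_minus_wR_div_gammaR_pos[OF disc c1 vc] by (simp add: one_minus_relax r0_def w_def)
  finally have "betaR a c0 c1 < c1 * v t"
    using R_pos alphaR_betaR(4)[OF disc] by (simp add: zero_less_mult_iff y_def w_def)
  moreover have "0 \<le> betaR a c0 c1"
  proof -
    have "c0 \<le> sqrt (c0\<^sup>2 + 4 * a * c1)"
      using a c1 by (intro real_le_rsqrt) simp
    then show ?thesis by (simp add: betaR_def wR_def disc_def)
  qed
  ultimately have "0 < c1 * v t"
    by linarith
  then show "0 < v t"
    using c1 by (simp add: zero_less_mult_iff)
  have "0 < y"
    using yR R_pos by (metis zero_less_mult_pos2 zero_less_one)
  then have "c1 * (a - c0 * v t - c1 * (v t)\<^sup>2) < 0"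
    using riccati_factor[OF disc, of "v t"] \<open>betaR a c0 c1 < c1 * v t\<close>
    by (simp add: y_def mult_pos_neg)
  then show "a - c0 * v t - c1 * (v t)\<^sup>2 \<le> 0"
    using c1 by (simp add: mult_less_0_iff)
qed

lemma alphaR_pos_betaR_neg:
  assumes "0 \<le> disc a c0 c1" "0 \<le> c0" "0 < c1" "a < 0"
  shows "betaR a c0 c1 < 0" and "0 < alphaR a c0 c1"
proof -
  have "wR a c0 c1 < c0"
  proof -
    have "sqrt (c0\<^sup>2 + 4 * a * c1) < sqrt (c0\<^sup>2)"
      using assms by (intro real_sqrt_less_mono) (simp add: mult_neg_pos)
    then show ?thesis using assms(2) by (simp add: wR_def disc_def)
  qed
  then show "betaR a c0 c1 < 0" "0 < alphaR a c0 c1"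
    using alphaR_betaR(1)[OF assms(1)] by (simp_all add: alphaR_def betaR_def)
qed

lemma t_circ_identity:
  fixes \<alpha> \<beta> c1 vc :: real
  assumes \<alpha>: "0 < \<alpha>" and \<beta>: "\<beta> < 0" and c1: "0 < c1" and vc: "0 < vc"
  defines "X \<equiv> vc / (\<alpha> * \<beta> / c1 + vc * \<beta>)"
  shows "1 / (c1 * vc + \<alpha>) - (1 - (\<alpha> + \<beta>) / (c1 * vc + \<alpha>)) * X / (1 - (\<alpha> + \<beta>) * X) = 1 / \<alpha>"
proof -
  define a where "a = \<alpha> * \<beta> / c1"
  have N: "0 < c1 * vc"
    using c1 vc by simp
  then have k: "0 < c1 * vc - \<beta>"
    using \<beta> by simp
  have den: "a + vc * \<beta> < 0"
    using \<alpha> \<beta> c1 vc by (simp add: a_def add_neg_neg mult_pos_neg divide_neg_pos)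
  have a_minus: "a - \<alpha> * vc = - \<alpha> * (c1 * vc - \<beta>) / c1"
    using c1 by (simp add: a_def field_simps)
  then have "a - \<alpha> * vc < 0"
    using k \<alpha> c1 by (simp add: divide_neg_pos mult_pos_pos)
  moreover have "1 - (\<alpha> + \<beta>) * X = (a - \<alpha> * vc) / (a + vc * \<beta>)"
    using den by (simp add: X_def a_def[symmetric] field_simps)
  ultimately have "X / (1 - (\<alpha> + \<beta>) * X) = vc / (a - \<alpha> * vc)"
    using den by (simp add: X_def a_def[symmetric])
  also have "\<dots> = - c1 * vc / (\<alpha> * (c1 * vc - \<beta>))"
    using k \<alpha> c1 unfolding a_minus by (simp add: field_simps)
  finally have e1: "X / (1 - (\<alpha> + \<beta>) * X) = - c1 * vc / (\<alpha> * (c1 * vc - \<beta>))" .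
  have e2: "1 - (\<alpha> + \<beta>) / (c1 * vc + \<alpha>) = (c1 * vc - \<beta>) / (c1 * vc + \<alpha>)"
    using \<alpha> N by (simp add: field_simps)
  have cancel: "K / G * (N / (\<alpha> * K)) = N / (\<alpha> * G)" if "K \<noteq> 0" for K G N :: real
    using that by (simp add: divide_simps)
  have "(1 - (\<alpha> + \<beta>) / (c1 * vc + \<alpha>)) * X / (1 - (\<alpha> + \<beta>) * X)
      = (1 - (\<alpha> + \<beta>) / (c1 * vc + \<alpha>)) * (X / (1 - (\<alpha> + \<beta>) * X))"
    by (rule times_divide_eq_right[symmetric])
  also have "\<dots> = - c1 * vc / (\<alpha> * (c1 * vc + \<alpha>))"
    unfolding e1 e2 using cancel k by simp
  finally have "(1 - (\<alpha> + \<beta>) / (c1 * vc + \<alpha>)) * X / (1 - (\<alpha> + \<beta>) * X)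
      = - c1 * vc / (\<alpha> * (c1 * vc + \<alpha>))" .
  moreover have "1 / (c * v + A) - - c * v / (A * (c * v + A)) = 1 / A"
    if "0 < A" "0 < c * v" for A c v :: real
    using that by (simp add: divide_simps)
  ultimately show ?thesis
    using \<alpha> N by simp
qed

lemma relax_t_circ:
  assumes disc: "0 \<le> disc a c0 c1" and "0 \<le> c0" "0 < c1" "0 < vc" "a < 0"
  shows "relax (1 / gammaR a c0 c1 vc) (wR a c0 c1) (t_circ a c0 c1 vc) = 1 / alphaR a c0 c1"
proof -
  define \<alpha> \<beta> w where "\<alpha> = alphaR a c0 c1" and "\<beta> = betaR a c0 c1" and "w = wR a c0 c1"
  have \<alpha>: "0 < \<alpha>" and \<beta>: "\<beta> < 0"
    using alphaR_pos_betaR_neg[OF disc \<open>0 \<le> c0\<close> \<open>0 < c1\<close> \<open>a < 0\<close>] by (simp_all add: \<alpha>_def \<beta>_def)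
  have a_eq: "a = \<alpha> * \<beta> / c1" and w_eq: "w = \<alpha> + \<beta>"
    using alphaR_betaR[OF disc] \<open>0 < c1\<close> by (simp_all add: \<alpha>_def \<beta>_def w_def field_simps)
  define X where "X = vc / (a + vc * \<beta>)"
  have "a + vc * \<beta> < 0"
    using \<open>a < 0\<close> \<open>0 < vc\<close> \<beta> by (simp add: add_neg_neg mult_pos_neg)
  then have "X < 0"
    using \<open>0 < vc\<close> by (simp add: X_def divide_pos_neg)
  then have X_pos: "0 < 1 - w * X"
    using alphaR_betaR(1)[OF disc] mult_nonneg_nonpos[of w X] by (simp add: w_def)
  have "relax (1 / gammaR a c0 c1 vc) w (LL X w)
      = 1 / (c1 * vc + \<alpha>) - (1 - w / (c1 * vc + \<alpha>)) * X / (1 - w * X)"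
    using relax_LL[OF X_pos] by (simp add: gammaR_def \<alpha>_def)
  also have "\<dots> = 1 / \<alpha>"
    using t_circ_identity[OF \<alpha> \<beta> \<open>0 < c1\<close> \<open>0 < vc\<close>] by (simp add: X_def a_eq w_eq)
  finally show ?thesis
    by (simp add: t_circ_def X_def \<alpha>_def \<beta>_def w_def)
qed

lemma riccati_case_d:
  fixes v :: "real \<Rightarrow> real"
  assumes disc: "0 \<le> disc a c0 c1" and c0: "0 \<le> c0" and c1: "0 < c1" and vc: "0 < vc"
    and a: "a < 0"
    and ode: "\<And>t. t_inf a c0 c1 vc < t \<Longrightarrow> t < t_circ a c0 c1 vc \<Longrightarrow>
      (v has_real_derivative a - c0 * v t - c1 * (v t)\<^sup>2) (at t)"
    and init: "v 0 = vc"
  shows "t_inf a c0 c1 vc < 0" and "0 < t_circ a c0 c1 vc"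
    and "\<And>t. t_inf a c0 c1 vc < t \<Longrightarrow> t < t_circ a c0 c1 vc \<Longrightarrow>
      0 < v t \<and> a - c0 * v t - c1 * (v t)\<^sup>2 \<le> 0"
proof -
  define \<alpha> where "\<alpha> = alphaR a c0 c1"
  define R where "R = relax (1 / gammaR a c0 c1 vc) (wR a c0 c1)"
  have \<alpha>: "0 < \<alpha>" and "betaR a c0 c1 < 0"
    using alphaR_pos_betaR_neg[OF disc c0 c1 a] by (simp_all add: \<alpha>_def)
  then have "vinf a c0 c1 < 0"
    using c1 by (simp add: vinf_def divide_neg_pos)
  then have vc': "vinf a c0 c1 < vc"
    using vc by simp
  have \<gamma>: "gammaR a c0 c1 vc = c1 * vc + \<alpha>"
    by (simp add: gammaR_def \<alpha>_def)
  have R_mono: "R x < R y \<longleftrightarrow> x < y" for x y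
    using strict_mono_less[OF relax_strict_mono[OF one_minus_wR_div_gammaR_pos[OF disc c1 vc']]]
    by (simp add: R_def)
  have R_circ: "R (t_circ a c0 c1 vc) = 1 / \<alpha>"
    using relax_t_circ[OF disc c0 c1 vc a] by (simp add: R_def \<alpha>_def)
  have "R 0 < 1 / \<alpha>"
    using \<alpha> c1 vc by (simp add: R_def \<gamma> frac_less2)
  then show "0 < t_circ a c0 c1 vc"
    using R_mono R_circ by metis
  show "t_inf a c0 c1 vc < 0"
    by (rule t_inf_neg[OF disc c1 vc'])
  fix t
  assume t: "t_inf a c0 c1 vc < t" "t < t_circ a c0 c1 vc"
  have "R t < 1 / \<alpha>"
    using R_mono R_circ t(2) by metis
  moreover have R_pos: "0 < R t"
    using relax_pos_iff_t_inf_less[OF disc c1 vc'] t(1) by (simp add: R_def)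
  moreover have "(c1 * v t + \<alpha>) * R t = 1"
    unfolding R_def \<alpha>_def
    by (rule riccati_reciprocal[where I = "{t_inf a c0 c1 vc<..<t_circ a c0 c1 vc}"])
      (use disc init ode t \<gamma> \<alpha> mult_pos_pos[OF c1 vc] \<open>0 < t_circ a c0 c1 vc\<close>
        t_inf_neg[OF disc c1 vc'] in auto)
  ultimately have "0 < c1 * v t * R t"
    using \<alpha> by (simp add: field_simps)
  then have "0 < v t"
    using c1 R_pos by (simp add: zero_less_mult_iff)
  moreover have "0 \<le> c0 * v t" "0 \<le> c1 * (v t)\<^sup>2"
    using c0 c1 \<open>0 < v t\<close> by simp_all
  ultimately show "0 < v t \<and> a - c0 * v t - c1 * (v t)\<^sup>2 \<le> 0"
    using a by linarith
qed

lemma riccati_arctan_invariant: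
  fixes v :: "real \<Rightarrow> real"
  assumes c1: "0 < c1" and disc: "disc a c0 c1 < 0" and I: "convex I" "0 \<in> I"
    and ode: "\<And>t. t \<in> I \<Longrightarrow> (v has_real_derivative a - c0 * v t - c1 * (v t)\<^sup>2) (at t)"
    and init: "v 0 = vc" and t: "t \<in> I"
  shows "arctan ((2 * c1 * v t + c0) / wAbs a c0 c1)
    = arctan ((2 * c1 * vc + c0) / wAbs a c0 c1) - wAbs a c0 c1 * t / 2"
proof -
  define W where "W = wAbs a c0 c1"
  have W: "0 < W"
    using disc by (simp add: W_def wAbs_def)
  have W2: "W\<^sup>2 = - c0\<^sup>2 - 4 * a * c1"
    using disc by (simp add: W_def wAbs_def disc_def)
  define u where "u = (\<lambda>t. (2 * c1 * v t + c0) / W)"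
  define h where "h = (\<lambda>t. arctan (u t) + W * t / 2)"
  have "(h has_real_derivative 0) (at s within I)" if s: "s \<in> I" for s
  proof -
    define P where "P = a - c0 * v s - c1 * (v s)\<^sup>2"
    have "(u has_real_derivative 2 * c1 * P / W) (at s)"
      unfolding u_def P_def using ode[OF s] W by (auto intro!: derivative_eq_intros)
    then have "(h has_real_derivative inverse (1 + (u s)\<^sup>2) * (2 * c1 * P / W) + W / 2) (at s)"
      unfolding h_def by (intro DERIV_add DERIV_chain2[OF DERIV_arctan]) (auto intro!: derivative_eq_intros)
    moreover have "inverse (1 + (u s)\<^sup>2) * (2 * c1 * P / W) + W / 2 = 0"
    proof -
      have "(1 + (u s)\<^sup>2) * W\<^sup>2 = W\<^sup>2 + (2 * c1 * v s + c0)\<^sup>2"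
        using W by (simp add: u_def power_divide field_simps)
      also have "\<dots> = - 4 * c1 * P"
        unfolding W2 P_def by (simp add: algebra_simps power2_eq_square)
      finally have P_eq: "P = - (1 + (u s)\<^sup>2) * W\<^sup>2 / (4 * c1)"
        using c1 by (simp add: eq_divide_eq algebra_simps)
      have "inverse U * (2 * c1 * (- U * W\<^sup>2 / (4 * c1)) / W) + W / 2 = 0"
        if "U \<noteq> 0" for U
        using that W c1 by (simp add: field_simps power2_eq_square)
      moreover have "1 + (u s)\<^sup>2 \<noteq> 0"
        by (smt (verit) zero_le_power2)
      ultimately show ?thesis
        unfolding P_eq by blast
    qed
    ultimately show ?thesis
      using has_field_derivative_at_within by fastforce
  qed
  then obtain c where "\<forall>x\<in>I. h x = c"
    using has_field_derivative_zero_constant[OF I(1)] by blast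
  then have "h t = h 0"
    using t I(2) by simp
  then show ?thesis
    by (simp add: h_def u_def init W_def)
qed

lemma theta0_eq_arctan_diff:
  assumes disc: "disc a c0 c1 < 0" and c0: "0 \<le> c0" and c1: "0 < c1" and vc: "0 < vc"
  shows "theta0 a c0 c1 vc = arctan ((2 * c1 * vc + c0) / wAbs a c0 c1) - arctan (c0 / wAbs a c0 c1)"
proof -
  define W where "W = wAbs a c0 c1"
  have W: "0 < W"
    using disc by (simp add: W_def wAbs_def)
  have W2: "W * W = - (c0 * c0) - 4 * a * c1"
    using disc by (simp add: W_def wAbs_def disc_def power2_eq_square[symmetric])
  have "a * c1 < 0"
    using disc zero_le_power2[of c0] unfolding disc_def mult.assoc by linarith
  then have a: "a < 0"
    using c1 by (simp add: mult_less_0_iff)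
  define u0 where "u0 = (2 * c1 * vc + c0) / W"
  define A where "A = arctan u0"
  define B where "B = arctan (c0 / W)"
  have "0 < u0"
    using W c1 vc c0 by (simp add: u0_def add_pos_nonneg)
  then have A: "0 < A" "A < pi / 2"
    using arctan_ubound[of u0] by (auto simp: A_def)
  have B: "0 \<le> B" "B < pi / 2"
    using W c0 arctan_ubound[of "c0 / W"] by (auto simp: B_def)
  have "cos A \<noteq> 0" "cos B \<noteq> 0" "cos (A - B) \<noteq> 0"
    using A B by (auto intro!: less_imp_neq[symmetric] cos_gt_zero_pi)
  from tan_diff[OF this] have "tan (A - B) = (u0 - c0 / W) / (1 + u0 * (c0 / W))"
    by (simp add: A_def B_def tan_arctan)
  also have "\<dots> = vc * W / (vc * c0 + 2 * \<bar>a\<bar>)"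
  proof -
    have num: "u0 - c0 / W = 2 * c1 * vc / W"
      using W by (simp add: u0_def field_simps)
    have den: "1 + u0 * (c0 / W) = 2 * c1 * (vc * c0 - 2 * a) / (W * W)"
    proof -
      have "1 + u0 * (c0 / W) = (W * W + (2 * c1 * vc + c0) * c0) / (W * W)"
        using W by (simp add: u0_def field_simps)
      then show ?thesis
        using W2 by (simp add: algebra_simps)
    qed
    have "0 < vc * c0 - 2 * a"
      using a mult_nonneg_nonneg[OF less_imp_le[OF vc] c0] by linarith
    have "(K * vc / W) / (K * D / (W * W)) = vc * W / D" if "K \<noteq> 0" "D \<noteq> 0" for K D
      using that W by (simp add: field_simps)
    from this[of "2 * c1" "vc * c0 - 2 * a"]
    have "(2 * c1 * vc / W) / (2 * c1 * (vc * c0 - 2 * a) / (W * W)) = vc * W / (vc * c0 - 2 * a)"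
      using c1 \<open>0 < vc * c0 - 2 * a\<close> by simp
    then show ?thesis
      unfolding num den using a by simp
  qed
  finally have "arctan (vc * W / (vc * c0 + 2 * \<bar>a\<bar>)) = arctan (tan (A - B))"
    by simp
  also have "\<dots> = A - B"
    using A B by (intro arctan_tan) auto
  finally show ?thesis
    by (simp add: theta0_def A_def B_def u0_def W_def)
qed

lemma riccati_case_e:
  fixes v :: "real \<Rightarrow> real"
  assumes disc: "disc a c0 c1 < 0" and c0: "0 \<le> c0" and c1: "0 < c1" and vc: "0 < vc"
    and ode: "\<And>t. t_vinf a c0 c1 vc < t \<Longrightarrow> t < t_vcirc a c0 c1 vc \<Longrightarrow>
      (v has_real_derivative a - c0 * v t - c1 * (v t)\<^sup>2) (at t)"
    and init: "v 0 = vc"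
  shows "t_vinf a c0 c1 vc < 0" and "0 < t_vcirc a c0 c1 vc"
    and "\<And>t. t_vinf a c0 c1 vc < t \<Longrightarrow> t < t_vcirc a c0 c1 vc \<Longrightarrow>
      0 < v t \<and> a - c0 * v t - c1 * (v t)\<^sup>2 \<le> 0"
proof -
  define W where "W = wAbs a c0 c1"
  have W: "0 < W"
    using disc by (simp add: W_def wAbs_def)
  have "a * c1 < 0"
    using disc zero_le_power2[of c0] unfolding disc_def mult.assoc by linarith
  then have a: "a < 0"
    using c1 by (simp add: mult_less_0_iff)
  have "0 < vc * c0 + 2 * \<bar>a\<bar>"
    using a mult_nonneg_nonneg[OF less_imp_le[OF vc] c0] by linarith
  then have "0 < theta0 a c0 c1 vc"
    using vc W by (simp add: theta0_def W_def)
  then show "0 < t_vcirc a c0 c1 vc"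
    using W by (simp add: t_vcirc_def W_def)
  have "0 < 2 * c1 * vc + c0"
    using c1 vc c0 by (simp add: add_pos_nonneg)
  then show "t_vinf a c0 c1 vc < 0"
    using W by (simp add: t_vinf_def theta1_def W_def)
  fix t
  assume t: "t_vinf a c0 c1 vc < t" "t < t_vcirc a c0 c1 vc"
  have "arctan ((2 * c1 * v t + c0) / W) = arctan ((2 * c1 * vc + c0) / W) - W * t / 2"
    unfolding W_def
    by (rule riccati_arctan_invariant[where I = "{t_vinf a c0 c1 vc<..<t_vcirc a c0 c1 vc}"])
      (use c1 disc init ode t \<open>t_vinf a c0 c1 vc < 0\<close> \<open>0 < t_vcirc a c0 c1 vc\<close> in auto)
  moreover have "W * t / 2 < arctan ((2 * c1 * vc + c0) / W) - arctan (c0 / W)"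
    using t(2) W theta0_eq_arctan_diff[OF disc c0 c1 vc]
    by (simp add: t_vcirc_def W_def field_simps)
  ultimately have "arctan (c0 / W) < arctan ((2 * c1 * v t + c0) / W)"
    by linarith
  then have "c0 / W < (2 * c1 * v t + c0) / W"
    by (simp add: arctan_less_iff)
  then have "0 < v t"
    using W c1 by (simp add: divide_less_cancel zero_less_mult_iff)
  moreover have "0 \<le> c0 * v t" "0 \<le> c1 * (v t)\<^sup>2"
    using c0 c1 \<open>0 < v t\<close> by simp_all
  ultimately show "0 < v t \<and> a - c0 * v t - c1 * (v t)\<^sup>2 \<le> 0"
    using a by linarith
qed

lemma open_ereal_window: "open {t. lo < t \<and> ereal t < hi}"
proof (cases hi)
  case (real r)
  then have "{t. lo < t \<and> ereal t < hi} = {lo<..<r}" by auto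
  then show ?thesis by simp
next
  case PInf
  then have "{t. lo < t \<and> ereal t < hi} = {lo<..}" by auto
  then show ?thesis by simp
next
  case MInf
  then show ?thesis by simp
qed

lemma is_interval_ereal_window: "is_interval {t. lo < t \<and> ereal t < hi}"
  unfolding is_interval_1 by (auto intro: le_less_trans[of "ereal _" "ereal _"])

lemma riccati_window:
  fixes a c0 c1 vc tmin :: real and tmax :: ereal and v :: "real \<Rightarrow> real"
  assumes c0: "c0 \<ge> 0" and c1: "c1 > 0" and vc: "vc > 0"
    and cases:
      "(disc a c0 c1 \<ge> 0 \<and> a \<ge> 0 \<and> vc > vinf a c0 c1
          \<and> tmin = t_inf a c0 c1 vc \<and> tmax = \<infinity>)
     \<or> (disc a c0 c1 \<ge> 0 \<and> a < 0
          \<and> tmin = t_inf a c0 c1 vc \<and> tmax = ereal (t_circ a c0 c1 vc))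
     \<or> (disc a c0 c1 < 0
          \<and> tmin = t_vinf a c0 c1 vc \<and> tmax = ereal (t_vcirc a c0 c1 vc))"
    and ode: "\<And>t. tmin < t \<Longrightarrow> ereal t < tmax \<Longrightarrow>
               (v has_real_derivative (a - c0 * v t - c1 * (v t)\<^sup>2)) (at t)"
    and init: "v 0 = vc"
  shows "tmin < 0 \<and> ereal 0 < tmax \<and>
    (\<forall>t. tmin < t \<and> ereal t < tmax \<longrightarrow> 0 < v t \<and> a - c0 * v t - c1 * (v t)\<^sup>2 \<le> 0)"
  using cases
proof (elim disjE conjE)
  assume h: "0 \<le> disc a c0 c1" "0 \<le> a" "vinf a c0 c1 < vc" "tmin = t_inf a c0 c1 vc" "tmax = \<infinity>"
  then have "\<And>t. t_inf a c0 c1 vc < t \<Longrightarrow> (v has_real_derivative a - c0 * v t - c1 * (v t)\<^sup>2) (at t)"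
    using ode by simp
  from riccati_case_c[OF h(1) c1 h(2,3) this init] show ?thesis
    using t_inf_neg[OF h(1) c1 h(3)] h by simp
next
  assume h: "0 \<le> disc a c0 c1" "a < 0" "tmin = t_inf a c0 c1 vc" "tmax = ereal (t_circ a c0 c1 vc)"
  then have "\<And>t. t_inf a c0 c1 vc < t \<Longrightarrow> t < t_circ a c0 c1 vc \<Longrightarrow>
      (v has_real_derivative a - c0 * v t - c1 * (v t)\<^sup>2) (at t)"
    using ode by simp
  from riccati_case_d[OF h(1) c0 c1 vc h(2) this init] show ?thesis
    using h by simp
next
  assume h: "disc a c0 c1 < 0" "tmin = t_vinf a c0 c1 vc" "tmax = ereal (t_vcirc a c0 c1 vc)"
  then have "\<And>t. t_vinf a c0 c1 vc < t \<Longrightarrow> t < t_vcirc a c0 c1 vc \<Longrightarrow>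
      (v has_real_derivative a - c0 * v t - c1 * (v t)\<^sup>2) (at t)"
    using ode by simp
  from riccati_case_e[OF h(1) c0 c1 vc this init] show ?thesis
    using h by simp
qed

theorem mainTheorem11:
  fixes a c0 c1 vc tmin tstar :: real and tmax :: ereal and v :: "real \<Rightarrow> real"
  assumes c0: "c0 \<ge> 0" and c1: "c1 > 0" and vc: "vc > 0"
    and cases:
      "(disc a c0 c1 \<ge> 0 \<and> a \<ge> 0 \<and> vc > vinf a c0 c1
          \<and> tmin = t_inf a c0 c1 vc \<and> tmax = \<infinity>)
     \<or> (disc a c0 c1 \<ge> 0 \<and> a < 0
          \<and> tmin = t_inf a c0 c1 vc \<and> tmax = ereal (t_circ a c0 c1 vc))
     \<or> (disc a c0 c1 < 0
          \<and> tmin = t_vinf a c0 c1 vc \<and> tmax = ereal (t_vcirc a c0 c1 vc))"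
    and ode: "\<And>t. tmin < t \<Longrightarrow> ereal t < tmax \<Longrightarrow>
               (v has_real_derivative (a - c0 * v t - c1 * (v t)\<^sup>2)) (at t)"
    and init: "v 0 = vc"
    and tstar: "tmin < tstar" "ereal tstar < tmax"
  shows "let f = (\<lambda>t. sint v t - sint v tstar); tk = newton_seq f v tmin in
           (\<forall>k. tmin < tk k \<and> ereal (tk k) < tmax)
         \<and> tk \<longlonglongrightarrow> tstar
         \<and> (\<exists>C. \<forall>\<^sub>F k in sequentially.
                 tk k \<noteq> tstar \<longrightarrow> \<bar>tk (Suc k) - tstar\<bar> / \<bar>tk k - tstar\<bar>\<^sup>2 \<le> C)"
proof -
  define I where "I = {t. tmin < t \<and> ereal t < tmax}"
  define v' where "v' = (\<lambda>t. a - c0 * v t - c1 * (v t)\<^sup>2)"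
  note window = riccati_window[OF c0 c1 vc cases ode init]
  have v_deriv: "\<And>t. t \<in> I \<Longrightarrow> (v has_real_derivative v' t) (at t)"
    using ode by (simp add: I_def v'_def)
  then have v_cont: "continuous_on I v"
    using DERIV_isCont by (blast intro: continuous_at_imp_continuous_on)
  interpret concave_newton "\<lambda>t. sint v t - sint v tstar" v v' I tmin tstar
  proof
    show "open I" "is_interval I"
      unfolding I_def by (rule open_ereal_window is_interval_ereal_window)+
    show "continuous_on I v'"
      using v_cont unfolding v'_def by (intro continuous_intros)
    show "((\<lambda>t. sint v t - sint v tstar) has_real_derivative v t) (at t)" if "t \<in> I" for t
      using sint_has_real_derivative[OF \<open>open I\<close> \<open>is_interval I\<close> _ that v_cont] window
      by (auto simp: I_def intro!: derivative_eq_intros)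
    show "s \<in> I" if "t \<in> I" "tmin < s" "s \<le> t" for t s
      using that by (auto simp: I_def intro: le_less_trans[of "ereal s" "ereal t"])
  qed (use window v_deriv tstar in \<open>auto simp: I_def v'_def\<close>)
  show ?thesis
    unfolding Let_def using seq_in_I seq_tendsto seq_quadratic by (simp add: I_def)
qed

end
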